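(* Let $X$ be a separated metric compact Hausdorff space with metric $d$ and let $A\subseteq X$ be a closed subset, with the induced topology and metric, so that the inclusion $A\hookrightarrow X$ is an embedding. Let $q_0,q_1\colon X\to P$ be the pushout in $\mathbf{MetCH_{sep}}$ of $A\hookrightarrow X$ along itself. Then the kernel metric of $\binom{q_0}{q_1}\colon X+X\to P$, i.e. $((x,i),(y,j))\mapsto d_P(q_i(x),q_j(y))$, equals $\gamma^A$.
   Context: A metric on a set $X$ is a map $d\colon X\times X\to[0,\infty]$ with $d(x,x)=0$ and $d(x,z)\le d(x,y)+d(y,z)$ (not necessarily symmetric, $\infty$ allowed); separated means $d(x,y)=0=d(y,x)$ implies $x=y$. A separated metric compact Hausdorff space is a compact Hausdorff space with a separated metric continuous $X\times X\to[0,\infty]$ for the upper topology on $[0,\infty]$ (open sets $]u,\infty]$); $\mathbf{MetCH_{sep}}$ is the category of these with continuous non-expansive maps; an embedding is an injective morphism preserving distances. $X+X$ is the coproduct with elements $(x,i)$, $i\in\{0,1\}$. $\gamma^A\colon(X+X)\times(X+X)\to[0,\infty]$ is defined by $\gamma^A((x,i),(y,i))=d(x,y)$ and $\gamma^A((x,i),(y,1-i))=\inf_{a\in A}(d(x,a)+d(a,y))$ for $x,y\in X$, $i\in\{0,1\}$. *)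

theory Defs
  imports "HOL-Analysis.Analysis" "HOL-Library.Extended_Nonnegative_Real"
begin

text \<open>Metrics with values in [0,\<infinity>] are modelled by ennreal.
  A metric on the carrier S: d x x = 0 and the triangle inequality (no symmetry).\<close>
definition is_metric_on :: "'a set \<Rightarrow> ('a \<Rightarrow> 'a \<Rightarrow> ennreal) \<Rightarrow> bool" where
  "is_metric_on S d \<longleftrightarrow>
     (\<forall>x\<in>S. d x x = 0) \<and>
     (\<forall>x\<in>S. \<forall>y\<in>S. \<forall>z\<in>S. d x z \<le> d x y + d y z)"

definition separated_on :: "'a set \<Rightarrow> ('a \<Rightarrow> 'a \<Rightarrow> ennreal) \<Rightarrow> bool" where
  "separated_on S d \<longleftrightarrow> (\<forall>x\<in>S. \<forall>y\<in>S. d x y = 0 \<and> d y x = 0 \<longrightarrow> x = y)"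

text \<open>Continuity of d : X \<times> X \<rightarrow> [0,\<infinity>] for the upper topology on [0,\<infinity>],
  whose open sets are ]u,\<infinity>] (together with the whole space and the empty set).\<close>
definition upper_continuous :: "'a topology \<Rightarrow> ('a \<Rightarrow> 'a \<Rightarrow> ennreal) \<Rightarrow> bool" where
  "upper_continuous T d \<longleftrightarrow>
     (\<forall>u. openin (prod_topology T T)
            {p \<in> topspace T \<times> topspace T. u < d (fst p) (snd p)})"

definition metch_sep :: "'a topology \<Rightarrow> ('a \<Rightarrow> 'a \<Rightarrow> ennreal) \<Rightarrow> bool" where
  "metch_sep T d \<longleftrightarrow> compact_space T \<and> Hausdorff_space T \<and>
     is_metric_on (topspace T) d \<and> separated_on (topspace T) d \<and> upper_continuous T d"

definition metch_mor :: "'a topology \<Rightarrow> ('a \<Rightarrow> 'a \<Rightarrow> ennreal) \<Rightarrow>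
    'b topology \<Rightarrow> ('b \<Rightarrow> 'b \<Rightarrow> ennreal) \<Rightarrow> ('a \<Rightarrow> 'b) \<Rightarrow> bool" where
  "metch_mor T d S e f \<longleftrightarrow> continuous_map T S f \<and>
     (\<forall>x\<in>topspace T. \<forall>y\<in>topspace T. e (f x) (f y) \<le> d x y)"

text \<open>The universal property
  is stated for all test objects whose points lie in the type 'a + 'a (the type of X + X).\<close>
definition is_pushout_incl ::
  "'a topology \<Rightarrow> ('a \<Rightarrow> 'a \<Rightarrow> ennreal) \<Rightarrow> 'a set \<Rightarrow>
   'p topology \<Rightarrow> ('p \<Rightarrow> 'p \<Rightarrow> ennreal) \<Rightarrow> ('a \<Rightarrow> 'p) \<Rightarrow> ('a \<Rightarrow> 'p) \<Rightarrow> bool" where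
  "is_pushout_incl X d A P dP q0 q1 \<longleftrightarrow>
     metch_sep P dP \<and> metch_mor X d P dP q0 \<and> metch_mor X d P dP q1 \<and>
     (\<forall>a\<in>A. q0 a = q1 a) \<and>
     (\<forall>(Y :: ('a + 'a) topology) e f0 f1.
        metch_sep Y e \<and> metch_mor X d Y e f0 \<and> metch_mor X d Y e f1 \<and>
        (\<forall>a\<in>A. f0 a = f1 a) \<longrightarrow>
          (\<exists>u. metch_mor P dP Y e u \<and>
               (\<forall>x\<in>topspace X. u (q0 x) = f0 x \<and> u (q1 x) = f1 x)) \<and>
          (\<forall>u v. metch_mor P dP Y e u \<and>
               (\<forall>x\<in>topspace X. u (q0 x) = f0 x \<and> u (q1 x) = f1 x) \<and>
               metch_mor P dP Y e v \<and>
               (\<forall>x\<in>topspace X. v (q0 x) = f0 x \<and> v (q1 x) = f1 x) \<longrightarrow>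
               (\<forall>p\<in>topspace P. u p = v p)))"

text \<open>The metric gamma^A on X + X (copies Inl = index 0, Inr = index 1).\<close>
fun gammaA :: "('a \<Rightarrow> 'a \<Rightarrow> ennreal) \<Rightarrow> 'a set \<Rightarrow> 'a + 'a \<Rightarrow> 'a + 'a \<Rightarrow> ennreal" where
  "gammaA d A (Inl x) (Inl y) = d x y"
| "gammaA d A (Inr x) (Inr y) = d x y"
| "gammaA d A (Inl x) (Inr y) = (INF a\<in>A. d x a + d a y)"
| "gammaA d A (Inr x) (Inl y) = (INF a\<in>A. d x a + d a y)"

definition kernel_metric :: "('p \<Rightarrow> 'p \<Rightarrow> ennreal) \<Rightarrow> ('z \<Rightarrow> 'p) \<Rightarrow> 'z \<Rightarrow> 'z \<Rightarrow> ennreal" where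
  "kernel_metric dP h u v = dP (h u) (h v)"

end

theory Submission
  imports Defs
begin

text \<open>The kernel metric is at most \<gamma>^A by the triangle inequality through a point of A,
  where q0 and q1 agree.  For the converse, glue two copies of X along A: the points Inl x and
  Inr x with x \<notin> A form a space on which \<gamma>^A is a separated metric.  It is upper
  continuous because A is compact, and an infimum over a compact set of a lower semicontinuous
  function stays lower semicontinuous.  So the glued space is an object of MetCH_sep under X + X,
  and the mediating map out of the pushout is non-expansive, giving \<gamma>^A below the kernel metric.\<close>

section \<open>Lower semicontinuous functions\<close>

lemma ennreal_less_add_left_approx:
  fixes w s t :: ennreal
  assumes "w < s + t" "0 < s"
  shows "\<exists>v<s. w < v + t"
proof -
  have "((\<lambda>v. v + t) \<longlongrightarrow> s + t) (at_left s)"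
    by (intro tendsto_intros)
  then have "\<forall>\<^sub>F v in at_left s. w < v + t"
    using assms(1) by (rule order_tendstoD)
  then obtain b where "b < s" "\<forall>v>b. v < s \<longrightarrow> w < v + t"
    using assms(2) by (auto simp: eventually_at_left)
  then show ?thesis
    using dense by blast
qed

text \<open>The alternative v = 0 is needed when s or t is 0, as nothing lies below 0.\<close>

lemma ennreal_less_add_split:
  fixes w s t :: ennreal
  assumes "w < s + t"
  shows "\<exists>v1 v2. (v1 < s \<or> v1 = 0) \<and> (v2 < t \<or> v2 = 0) \<and> w < v1 + v2"
proof -
  obtain v1 where v1: "v1 < s \<or> v1 = 0" "w < v1 + t"
    using ennreal_less_add_left_approx[OF assms] assms
    by (cases "s = 0") (auto simp: zero_less_iff_neq_zero)
  obtain v2 where "v2 < t \<or> v2 = 0" "w < v1 + v2"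
    using ennreal_less_add_left_approx[of w t v1] v1(2)
    by (cases "t = 0") (auto simp: zero_less_iff_neq_zero add.commute)
  with v1 show ?thesis
    by blast
qed

definition lower_semicontinuous_map :: "'a topology \<Rightarrow> ('a \<Rightarrow> ennreal) \<Rightarrow> bool" where
  "lower_semicontinuous_map T g \<longleftrightarrow> (\<forall>v. openin T {z \<in> topspace T. v < g z})"

lemma upper_continuous_iff_lower_semicontinuous_map:
  "upper_continuous T d \<longleftrightarrow> lower_semicontinuous_map (prod_topology T T) (\<lambda>p. d (fst p) (snd p))"
  by (simp add: upper_continuous_def lower_semicontinuous_map_def)

lemma lower_semicontinuous_map_compose:
  assumes "continuous_map S T f" "lower_semicontinuous_map T g"
  shows "lower_semicontinuous_map S (\<lambda>x. g (f x))"
  unfolding lower_semicontinuous_map_def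
proof
  fix v
  have "openin S {x \<in> topspace S. f x \<in> {z \<in> topspace T. v < g z}}"
    using assms unfolding lower_semicontinuous_map_def by (blast intro: openin_continuous_map_preimage)
  moreover have "{x \<in> topspace S. f x \<in> {z \<in> topspace T. v < g z}} = {x \<in> topspace S. v < g (f x)}"
    using continuous_map_image_subset_topspace[OF assms(1)] by auto
  ultimately show "openin S {x \<in> topspace S. v < g (f x)}"
    by simp
qed

lemma lower_semicontinuous_map_le_nhd:
  assumes "lower_semicontinuous_map T g" "z \<in> topspace T" "v < g z \<or> v = 0"
  obtains U where "openin T U" "z \<in> U" "\<And>z'. z' \<in> U \<Longrightarrow> v \<le> g z'"
proof (cases "v = 0")
  case True
  then show ?thesis
    using that[of "topspace T"] assms(2) by simp
next
  case False
  have "openin T {z \<in> topspace T. v < g z}"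
    using assms(1) unfolding lower_semicontinuous_map_def by blast
  then show ?thesis
    using that[of "{z \<in> topspace T. v < g z}"] assms(2,3) False by fastforce
qed

lemma lower_semicontinuous_map_add:
  assumes "lower_semicontinuous_map T g" "lower_semicontinuous_map T h"
  shows "lower_semicontinuous_map T (\<lambda>z. g z + h z)"
  unfolding lower_semicontinuous_map_def
proof (intro allI openin_subopen[THEN iffD2] ballI)
  fix v z
  assume "z \<in> {z \<in> topspace T. v < g z + h z}"
  then have z: "z \<in> topspace T" "v < g z + h z"
    by auto
  then obtain v1 v2 where v: "v1 < g z \<or> v1 = 0" "v2 < h z \<or> v2 = 0" "v < v1 + v2"
    using ennreal_less_add_split by blast
  obtain U1 where U1: "openin T U1" "z \<in> U1" "\<And>z'. z' \<in> U1 \<Longrightarrow> v1 \<le> g z'"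
    using lower_semicontinuous_map_le_nhd[OF assms(1) z(1) v(1)] by blast
  obtain U2 where U2: "openin T U2" "z \<in> U2" "\<And>z'. z' \<in> U2 \<Longrightarrow> v2 \<le> h z'"
    using lower_semicontinuous_map_le_nhd[OF assms(2) z(1) v(2)] by blast
  have "U1 \<inter> U2 \<subseteq> {z \<in> topspace T. v < g z + h z}"
  proof
    fix z' assume z': "z' \<in> U1 \<inter> U2"
    then have "v1 + v2 \<le> g z' + h z'"
      using U1(3) U2(3) by (simp add: add_mono)
    with v(3) have "v < g z' + h z'"
      by (rule less_le_trans)
    then show "z' \<in> {z \<in> topspace T. v < g z + h z}"
      using z' openin_subset[OF U1(1)] by blast
  qed
  then show "\<exists>U. openin T U \<and> z \<in> U \<and> U \<subseteq> {z \<in> topspace T. v < g z + h z}"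
    using U1 U2 by blast
qed

lemma compactin_finite_subcover_indexed:
  assumes "compactin X S" "\<And>i. i \<in> I \<Longrightarrow> openin X (U i)" "S \<subseteq> (\<Union>i\<in>I. U i)"
  obtains B where "B \<subseteq> I" "finite B" "S \<subseteq> (\<Union>i\<in>B. U i)"
proof -
  obtain \<F> where \<F>: "finite \<F>" "\<F> \<subseteq> U ` I" "S \<subseteq> \<Union>\<F>"
    using compactinD[OF assms(1), of "U ` I"] assms(2,3) by blast
  then obtain B where "B \<subseteq> I" "finite B" "\<F> = U ` B"
    by (meson finite_subset_image)
  with \<F>(3) show ?thesis
    using that by blast
qed

lemma lower_semicontinuous_map_attains_min:
  assumes g: "lower_semicontinuous_map T g" and K: "compactin T K" "K \<noteq> {}"
  shows "\<exists>a\<in>K. \<forall>b\<in>K. g a \<le> g b"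
proof (rule ccontr)
  assume "\<not> ?thesis"
  then have below: "\<exists>b\<in>K. g b < g a" if "a \<in> K" for a
    using that by (meson not_le)
  have "openin T {z \<in> topspace T. g b < g z}" if "b \<in> K" for b
    using g unfolding lower_semicontinuous_map_def by blast
  moreover have "K \<subseteq> (\<Union>b\<in>K. {z \<in> topspace T. g b < g z})"
    using below compactin_subset_topspace[OF K(1)] by blast
  ultimately obtain B where B: "B \<subseteq> K" "finite B" "K \<subseteq> (\<Union>b\<in>B. {z \<in> topspace T. g b < g z})"
    by (rule compactin_finite_subcover_indexed[OF K(1)])
  with K(2) have "B \<noteq> {}"
    by blast
  define m where "m = arg_min_on g B"
  have "m \<in> B" "\<not> (\<exists>b\<in>B. g b < g m)"
    unfolding m_def using arg_min_if_finite[OF B(2) \<open>B \<noteq> {}\<close>] by blast+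
  moreover from \<open>m \<in> B\<close> have "m \<in> K"
    using B(1) by blast
  ultimately show False
    using B(3) by blast
qed

lemma lower_semicontinuous_map_INF_compact:
  assumes g: "lower_semicontinuous_map (prod_topology S T) g" and K: "compactin T K"
  shows "lower_semicontinuous_map S (\<lambda>x. INF a\<in>K. g (x, a))"
  unfolding lower_semicontinuous_map_def
proof (intro allI openin_subopen[THEN iffD2] ballI)
  fix v x
  assume "x \<in> {x \<in> topspace S. v < (INF a\<in>K. g (x, a))}"
  then have x: "x \<in> topspace S" and "v < (INF a\<in>K. g (x, a))"
    by auto
  then obtain w where w: "v < w" "w < (INF a\<in>K. g (x, a))"
    using dense by blast
  define G where "G = {p \<in> topspace (prod_topology S T). w < g p}"
  have "openin (prod_topology S T) G"
    using g unfolding G_def lower_semicontinuous_map_def by blast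
  moreover have "(x, a) \<in> G" if "a \<in> K" for a
  proof -
    have "w < g (x, a)"
      using w(2) INF_lower[OF that] by (rule less_le_trans)
    then show ?thesis
      using that x compactin_subset_topspace[OF K] unfolding G_def by auto
  qed
  ultimately have "\<exists>U W. openin S U \<and> openin T W \<and> x \<in> U \<and> a \<in> W \<and> U \<times> W \<subseteq> G"
    if "a \<in> K" for a
    using that unfolding openin_prod_topology_alt by blast
  then obtain U W where UW: "\<And>a. a \<in> K \<Longrightarrow> openin S (U a) \<and> openin T (W a) \<and> x \<in> U a \<and> a \<in> W a \<and>
      U a \<times> W a \<subseteq> G"
    by metis
  obtain B where B: "B \<subseteq> K" "finite B" "K \<subseteq> (\<Union>a\<in>B. W a)"
    using UW by (auto intro: compactin_finite_subcover_indexed[OF K, of K W])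
  define U0 where "U0 = topspace S \<inter> \<Inter>(U ` B)"
  have "U0 \<subseteq> {x \<in> topspace S. v < (INF a\<in>K. g (x, a))}"
  proof clarify
    fix x' assume x': "x' \<in> U0"
    have "w \<le> g (x', a')" if a': "a' \<in> K" for a'
    proof -
      obtain a where a: "a \<in> B" "a' \<in> W a"
        using a' B(3) by blast
      moreover have "U a \<times> W a \<subseteq> G"
        using UW a(1) B(1) by blast
      moreover have "x' \<in> U a"
        using x' a(1) unfolding U0_def by blast
      ultimately show ?thesis
        unfolding G_def by (blast intro: less_imp_le)
    qed
    then have "w \<le> (INF a\<in>K. g (x', a))"
      by (rule INF_greatest)
    then show "x' \<in> topspace S \<and> v < (INF a\<in>K. g (x', a))"
      using x' w(1) unfolding U0_def by auto
  qed
  moreover have "openin S U0"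
    unfolding U0_def using B UW by (intro openin_Int_Inter) auto
  moreover have "x \<in> U0"
    unfolding U0_def using x B UW by auto
  ultimately show "\<exists>U. openin S U \<and> x \<in> U \<and> U \<subseteq> {x \<in> topspace S. v < (INF a\<in>K. g (x, a))}"
    by blast
qed

section \<open>The metric \<gamma>^A\<close>

fun unsum :: "'a + 'a \<Rightarrow> 'a" where
  "unsum (Inl x) = x"
| "unsum (Inr x) = x"

lemma unsum_in_Plus: "p \<in> S <+> S \<Longrightarrow> unsum p \<in> S"
  by auto

lemma gammaA_eq_if_isl:
  "gammaA d A p q =
     (if isl p = isl q then d (unsum p) (unsum q) else (INF a\<in>A. d (unsum p) a + d a (unsum q)))"
  by (cases p; cases q) simp_all

lemma nonexpansive_pair_le_through:
  assumes "is_metric_on (topspace P) dP" "metch_mor X d P dP f" "metch_mor X d P dP g"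
    and "x \<in> topspace X" "y \<in> topspace X" "a \<in> topspace X" "f a = g a"
  shows "dP (f x) (g y) \<le> d x a + d a y"
proof -
  have "f x \<in> topspace P" "g a \<in> topspace P" "g y \<in> topspace P"
    using assms(2-6) unfolding metch_mor_def continuous_map_def by auto
  then have "dP (f x) (g y) \<le> dP (f x) (g a) + dP (g a) (g y)"
    using assms(1) unfolding is_metric_on_def by blast
  also have "\<dots> \<le> d x a + d a y"
    using assms(2-7) unfolding metch_mor_def by (metis add_mono)
  finally show ?thesis .
qed

lemma kernel_metric_le_gammaA:
  assumes "is_metric_on (topspace P) dP" "metch_mor X d P dP q0" "metch_mor X d P dP q1"
    and "\<forall>a\<in>A. q0 a = q1 a" "A \<subseteq> topspace X"
    and "u \<in> topspace X <+> topspace X" "v \<in> topspace X <+> topspace X"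
  shows "kernel_metric dP (case_sum q0 q1) u v \<le> gammaA d A u v"
proof (cases u; cases v)
  fix x y assume "u = Inl x" "v = Inl y"
  then show ?thesis
    using assms(2,6,7) by (auto simp: kernel_metric_def metch_mor_def)
next
  fix x y assume "u = Inr x" "v = Inr y"
  then show ?thesis
    using assms(3,6,7) by (auto simp: kernel_metric_def metch_mor_def)
next
  fix x y assume "u = Inl x" "v = Inr y"
  then show ?thesis
    using assms nonexpansive_pair_le_through[OF assms(1-3), of x y]
    by (auto simp: kernel_metric_def intro!: INF_greatest)
next
  fix x y assume "u = Inr x" "v = Inl y"
  then show ?thesis
    using assms nonexpansive_pair_le_through[OF assms(1,3,2), of x y]
    by (auto simp: kernel_metric_def intro!: INF_greatest)
qed

section \<open>Gluing two copies of a space along a closed subset\<close>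

locale metch_sep_closed_subset =
  fixes X :: "'a topology" and d :: "'a \<Rightarrow> 'a \<Rightarrow> ennreal" and A :: "'a set"
  assumes metch_sep: "metch_sep X d" and closedin_A: "closedin X A"
begin

lemma A_subset: "A \<subseteq> topspace X"
  using closedin_A closedin_subset by blast

lemma d_refl: "x \<in> topspace X \<Longrightarrow> d x x = 0"
  using metch_sep unfolding metch_sep_def is_metric_on_def by blast

lemma d_triangle:
  "x \<in> topspace X \<Longrightarrow> y \<in> topspace X \<Longrightarrow> z \<in> topspace X \<Longrightarrow> d x z \<le> d x y + d y z"
  using metch_sep unfolding metch_sep_def is_metric_on_def by blast

lemma d_separated:
  "x \<in> topspace X \<Longrightarrow> y \<in> topspace X \<Longrightarrow> d x y = 0 \<Longrightarrow> d y x = 0 \<Longrightarrow> x = y"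
  using metch_sep unfolding metch_sep_def separated_on_def by blast

lemma lower_semicontinuous_d: "lower_semicontinuous_map (prod_topology X X) (\<lambda>p. d (fst p) (snd p))"
  using metch_sep unfolding metch_sep_def upper_continuous_iff_lower_semicontinuous_map by blast

lemma lower_semicontinuous_map_d_comp:
  assumes "continuous_map S X f" "continuous_map S X g"
  shows "lower_semicontinuous_map S (\<lambda>z. d (f z) (g z))"
  using lower_semicontinuous_map_compose[OF continuous_map_pairedI[OF assms] lower_semicontinuous_d]
  by simp

lemma compactin_A: "compactin X A"
  using metch_sep closedin_A unfolding metch_sep_def compact_space_def
  by (metis closed_compactin closedin_subset)

definition via_A :: "'a \<Rightarrow> 'a \<Rightarrow> ennreal" where
  "via_A x y = (INF a\<in>A. d x a + d a y)"

lemma via_A_le: "a \<in> A \<Longrightarrow> via_A x y \<le> d x a + d a y"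
  unfolding via_A_def by (rule INF_lower)

lemma via_A_attained:
  assumes "x \<in> topspace X" "y \<in> topspace X" "A \<noteq> {}"
  obtains a where "a \<in> A" "via_A x y = d x a + d a y"
proof -
  have "lower_semicontinuous_map X (\<lambda>a. d x a + d a y)"
    using assms by (intro lower_semicontinuous_map_add lower_semicontinuous_map_d_comp) auto
  then obtain a where "a \<in> A" "\<forall>b\<in>A. d x a + d a y \<le> d x b + d b y"
    using lower_semicontinuous_map_attains_min compactin_A assms(3) by blast
  moreover from this have "d x a + d a y \<le> via_A x y"
    unfolding via_A_def by (blast intro: INF_greatest)
  ultimately show ?thesis
    using that via_A_le by (metis antisym)
qed

lemma d_le_via_A: "x \<in> topspace X \<Longrightarrow> y \<in> topspace X \<Longrightarrow> d x y \<le> via_A x y"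
  unfolding via_A_def using d_triangle A_subset by (blast intro: INF_greatest)

lemma via_A_eq_d:
  assumes "x \<in> topspace X" "y \<in> topspace X" "x \<in> A \<or> y \<in> A"
  shows "via_A x y = d x y"
proof (rule antisym)
  show "via_A x y \<le> d x y"
    using assms via_A_le[of x x y] via_A_le[of y x y] d_refl by auto
qed (use assms d_le_via_A in auto)

lemma via_A_triangle_left:
  assumes "x \<in> topspace X" "y \<in> topspace X" "z \<in> topspace X"
  shows "via_A x z \<le> d x y + via_A y z"
proof (cases "A = {}")
  case False
  then obtain a where a: "a \<in> A" "via_A y z = d y a + d a z"
    using via_A_attained assms by metis
  have "via_A x z \<le> d x a + d a z"
    using a(1) by (rule via_A_le)
  also have "\<dots> \<le> d x y + (d y a + d a z)"
    using d_triangle assms a(1) A_subset by (metis add.assoc add_right_mono subsetD)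
  finally show ?thesis
    using a(2) by simp
qed (unfold via_A_def, simp)

lemma via_A_triangle_right:
  assumes "x \<in> topspace X" "y \<in> topspace X" "z \<in> topspace X"
  shows "via_A x z \<le> via_A x y + d y z"
proof (cases "A = {}")
  case False
  then obtain a where a: "a \<in> A" "via_A x y = d x a + d a y"
    using via_A_attained assms by metis
  have "via_A x z \<le> d x a + d a z"
    using a(1) by (rule via_A_le)
  also have "\<dots> \<le> (d x a + d a y) + d y z"
    using d_triangle assms a(1) A_subset by (metis add.assoc add_left_mono subsetD)
  finally show ?thesis
    using a(2) by simp
qed (unfold via_A_def, simp)

lemma d_le_via_A_add:
  "x \<in> topspace X \<Longrightarrow> y \<in> topspace X \<Longrightarrow> z \<in> topspace X \<Longrightarrow> d x z \<le> via_A x y + via_A y z"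
  using d_triangle d_le_via_A by (meson add_mono order_trans)

lemma via_A_zero_imp_mem:
  assumes "x \<in> topspace X" "y \<in> topspace X" "via_A x y = 0" "via_A y x = 0"
  shows "x \<in> A"
proof -
  have "A \<noteq> {}"
    using assms(3) by (auto simp: via_A_def)
  then obtain a where a: "a \<in> A" "d x a = 0" "d a y = 0"
    using via_A_attained[OF assms(1,2)] assms(3) by (metis add_eq_0_iff_both_eq_0)
  have "d y x = 0"
    using d_le_via_A[OF assms(2,1)] assms(4) by simp
  then have "d a x = 0"
    using d_triangle[of a y x] a A_subset assms(1,2) by auto
  then show ?thesis
    using d_separated[of a x] a A_subset assms(1) by auto
qed

lemma lower_semicontinuous_via_A:
  "lower_semicontinuous_map (prod_topology X X) (\<lambda>p. via_A (fst p) (snd p))"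
proof -
  have "continuous_map (prod_topology (prod_topology X X) X) X (\<lambda>r. fst (fst r))"
       "continuous_map (prod_topology (prod_topology X X) X) X (\<lambda>r. snd (fst r))"
    using continuous_map_compose[OF continuous_map_fst continuous_map_fst]
      continuous_map_compose[OF continuous_map_fst continuous_map_snd] by (simp_all add: o_def)
  then have "lower_semicontinuous_map (prod_topology (prod_topology X X) X)
      (\<lambda>r. d (fst (fst r)) (snd r) + d (snd r) (snd (fst r)))"
    by (intro lower_semicontinuous_map_add lower_semicontinuous_map_d_comp continuous_map_snd)
  from lower_semicontinuous_map_INF_compact[OF this compactin_A] show ?thesis
    unfolding via_A_def by simp
qed

text \<open>The quotient of X + X by Inl a \<sim> Inr a for a \<in> A, each class over A represented by its
  Inl point, with the final topology of the two maps Inl and glue_right from X.\<close>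

definition glue_right :: "'a \<Rightarrow> 'a + 'a" where
  "glue_right x = (if x \<in> A then Inl x else Inr x)"

definition glued_points :: "('a + 'a) set" where
  "glued_points = Inl ` topspace X \<union> Inr ` (topspace X - A)"

definition glued_topology :: "('a + 'a) topology" where
  "glued_topology = topology (\<lambda>W. W \<subseteq> glued_points \<and>
     openin X {x \<in> topspace X. Inl x \<in> W} \<and> openin X {x \<in> topspace X. glue_right x \<in> W})"

definition glued_side :: "bool \<Rightarrow> ('a + 'a) set" where
  "glued_side b = {p \<in> glued_points. isl p = b \<and> unsum p \<notin> A}"

definition crossing :: "'a + 'a \<Rightarrow> 'a + 'a \<Rightarrow> bool" where
  "crossing p q \<longleftrightarrow> isl p \<noteq> isl q \<and> unsum p \<notin> A \<and> unsum q \<notin> A"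

abbreviation gam :: "'a + 'a \<Rightarrow> 'a + 'a \<Rightarrow> ennreal" where
  "gam \<equiv> gammaA d A"

lemma mem_glued_points: "p \<in> glued_points \<longleftrightarrow> unsum p \<in> topspace X \<and> (isl p \<or> unsum p \<notin> A)"
  by (cases p) (auto simp: glued_points_def)

lemma glued_points_eqI:
  "p \<in> glued_points \<Longrightarrow> q \<in> glued_points \<Longrightarrow> unsum p = unsum q \<Longrightarrow> isl p = isl q \<or> unsum p \<in> A \<Longrightarrow> p = q"
  by (cases p; cases q) (auto simp: mem_glued_points)

lemma openin_glued_topology:
  "openin glued_topology W \<longleftrightarrow> W \<subseteq> glued_points \<and>
     openin X {x \<in> topspace X. Inl x \<in> W} \<and> openin X {x \<in> topspace X. glue_right x \<in> W}"
proof -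
  let ?L = "\<lambda>W. W \<subseteq> glued_points \<and>
     openin X {x \<in> topspace X. Inl x \<in> W} \<and> openin X {x \<in> topspace X. glue_right x \<in> W}"
  have "?L (S \<inter> T)" if "?L S" "?L T" for S T
  proof -
    have "{x \<in> topspace X. f x \<in> S \<inter> T} = {x \<in> topspace X. f x \<in> S} \<inter> {x \<in> topspace X. f x \<in> T}"
      for f :: "'a \<Rightarrow> 'a + 'a"
      by auto
    with that show ?thesis
      by auto
  qed
  moreover have "?L (\<Union>\<K>)" if "\<forall>W\<in>\<K>. ?L W" for \<K>
  proof -
    have "{x \<in> topspace X. f x \<in> \<Union>\<K>} = (\<Union>W\<in>\<K>. {x \<in> topspace X. f x \<in> W})"
      for f :: "'a \<Rightarrow> 'a + 'a"
      by auto
    with that show ?thesis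
      by (auto intro!: openin_Union)
  qed
  ultimately have "istopology ?L"
    unfolding istopology_def by blast
  then show ?thesis
    unfolding glued_topology_def by simp
qed

lemma topspace_glued_topology: "topspace glued_topology = glued_points"
proof -
  have "{x \<in> topspace X. Inl x \<in> glued_points} = topspace X"
       "{x \<in> topspace X. glue_right x \<in> glued_points} = topspace X"
    by (auto simp: mem_glued_points glue_right_def)
  then have "openin glued_topology glued_points"
    unfolding openin_glued_topology by simp
  then show ?thesis
    by (metis openin_glued_topology openin_subset openin_topspace subset_antisym)
qed

lemma continuous_map_Inl_glued: "continuous_map X glued_topology Inl"
  unfolding continuous_map_def topspace_glued_topology openin_glued_topology
  by (auto simp: glued_points_def)

lemma continuous_map_glue_right: "continuous_map X glued_topology glue_right"
  unfolding continuous_map_def topspace_glued_topology openin_glued_topology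
  by (auto simp: glued_points_def glue_right_def)

lemma continuous_map_unsum_glued: "continuous_map glued_topology X unsum"
  unfolding continuous_map_def topspace_glued_topology
proof (intro conjI ballI allI impI)
  fix U assume U: "openin X U"
  have "{x \<in> topspace X. Inl x \<in> {p \<in> glued_points. unsum p \<in> U}} = U"
       "{x \<in> topspace X. glue_right x \<in> {p \<in> glued_points. unsum p \<in> U}} = U"
    using openin_subset[OF U] by (auto simp: mem_glued_points glue_right_def)
  then show "openin glued_topology {p \<in> glued_points. unsum p \<in> U}"
    unfolding openin_glued_topology using U by auto
qed (simp add: mem_glued_points)

lemma openin_glued_side: "openin glued_topology (glued_side b)"
proof -
  have "openin X (topspace X - A)"
    using closedin_A by blast
  moreover have "{x \<in> topspace X. Inl x \<in> glued_side b} = (if b then topspace X - A else {})"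
       "{x \<in> topspace X. glue_right x \<in> glued_side b} = (if b then {} else topspace X - A)"
    by (auto simp: glued_side_def mem_glued_points glue_right_def)
  ultimately show ?thesis
    unfolding openin_glued_topology by (auto simp: glued_side_def)
qed

lemma compact_space_glued: "compact_space glued_topology"
proof -
  have "glued_points = Inl ` topspace X \<union> glue_right ` topspace X"
    by (auto simp: glued_points_def glue_right_def)
  moreover have "compactin glued_topology (Inl ` topspace X)" "compactin glued_topology (glue_right ` topspace X)"
    using metch_sep continuous_map_Inl_glued continuous_map_glue_right
    unfolding metch_sep_def compact_space_def by (blast intro: image_compactin)+
  ultimately show ?thesis
    unfolding compact_space_def topspace_glued_topology by (simp add: compactin_Un)
qed

lemma Hausdorff_space_glued: "Hausdorff_space glued_topology"
  unfolding Hausdorff_space_def topspace_glued_topology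
proof (intro allI impI)
  fix p q assume pq: "p \<in> glued_points \<and> q \<in> glued_points \<and> p \<noteq> q"
  show "\<exists>U V. openin glued_topology U \<and> openin glued_topology V \<and> p \<in> U \<and> q \<in> V \<and> disjnt U V"
  proof (cases "unsum p = unsum q")
    case False
    then obtain U V where UV: "openin X U" "openin X V" "unsum p \<in> U" "unsum q \<in> V" "disjnt U V"
      using metch_sep pq unfolding metch_sep_def Hausdorff_space_def by (meson mem_glued_points)
    let ?pre = "\<lambda>U. {p \<in> topspace glued_topology. unsum p \<in> U}"
    have "openin glued_topology (?pre U)" "openin glued_topology (?pre V)"
      using UV continuous_map_unsum_glued by (auto intro: openin_continuous_map_preimage)
    moreover have "disjnt (?pre U) (?pre V)"
      using UV(5) by (auto simp: disjnt_def)
    ultimately show ?thesis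
      using pq UV(3,4) unfolding topspace_glued_topology by blast
  next
    case True
    then have "isl p \<noteq> isl q" "unsum p \<notin> A"
      using pq glued_points_eqI by blast+
    then have "p \<in> glued_side (isl p)" "q \<in> glued_side (isl q)" "disjnt (glued_side (isl p)) (glued_side (isl q))"
      using pq True by (auto simp: glued_side_def disjnt_def)
    then show ?thesis
      using openin_glued_side by blast
  qed
qed

lemma gammaA_eq_if_crossing:
  assumes "unsum p \<in> topspace X" "unsum q \<in> topspace X"
  shows "gam p q = (if crossing p q then via_A (unsum p) (unsum q) else d (unsum p) (unsum q))"
  using assms via_A_eq_d by (auto simp: gammaA_eq_if_isl crossing_def via_A_def[symmetric])

lemma is_metric_on_glued: "is_metric_on glued_points gam"
  unfolding is_metric_on_def
proof (intro conjI ballI)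
  fix p assume "p \<in> glued_points"
  then show "gam p p = 0"
    using d_refl by (simp add: gammaA_eq_if_isl mem_glued_points)
next
  fix p q r assume "p \<in> glued_points" "q \<in> glued_points" "r \<in> glued_points"
  then have X: "unsum p \<in> topspace X" "unsum q \<in> topspace X" "unsum r \<in> topspace X"
    by (auto simp: mem_glued_points)
  note triangles = d_triangle[OF X] via_A_triangle_left[OF X] via_A_triangle_right[OF X] d_le_via_A_add[OF X]
  show "gam p r \<le> gam p q + gam q r"
    by (cases "isl p"; cases "isl q"; cases "isl r")
      (simp_all only: gammaA_eq_if_isl via_A_def[symmetric] if_True if_False simp_thms triangles)
qed

lemma separated_on_glued: "separated_on glued_points gam"
  unfolding separated_on_def
proof (intro ballI impI)
  fix p q assume pq: "p \<in> glued_points" "q \<in> glued_points" and zero: "gam p q = 0 \<and> gam q p = 0"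
  have X: "unsum p \<in> topspace X" "unsum q \<in> topspace X"
    using pq by (auto simp: mem_glued_points)
  show "p = q"
  proof (cases "crossing p q")
    case True
    then have "crossing q p"
      by (auto simp: crossing_def)
    then have "unsum p \<in> A"
      using zero True via_A_zero_imp_mem[OF X] by (simp add: gammaA_eq_if_crossing X)
    then show ?thesis
      using True by (simp add: crossing_def)
  next
    case False
    then have "\<not> crossing q p"
      by (auto simp: crossing_def)
    then have "unsum p = unsum q"
      using zero False d_separated[OF X] by (simp add: gammaA_eq_if_crossing X)
    then show ?thesis
      using False pq glued_points_eqI by (auto simp: crossing_def)
  qed
qed

lemma less_gammaA_iff:
  assumes "p \<in> glued_points" "q \<in> glued_points"
  shows "u < gam p q \<longleftrightarrow> u < d (unsum p) (unsum q) \<or>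
    (p, q) \<in> glued_side True \<times> glued_side False \<union> glued_side False \<times> glued_side True \<and>
    u < via_A (unsum p) (unsum q)"
proof -
  have X: "unsum p \<in> topspace X" "unsum q \<in> topspace X"
    using assms by (auto simp: mem_glued_points)
  have "(p, q) \<in> glued_side True \<times> glued_side False \<union> glued_side False \<times> glued_side True \<longleftrightarrow> crossing p q"
    using assms by (auto simp: glued_side_def crossing_def)
  then show ?thesis
    using d_le_via_A[OF X] by (auto simp: gammaA_eq_if_crossing[OF X] intro: less_le_trans)
qed

lemma upper_continuous_glued: "upper_continuous glued_topology gam"
  unfolding upper_continuous_iff_lower_semicontinuous_map lower_semicontinuous_map_def
proof
  fix u
  let ?Y2 = "prod_topology glued_topology glued_topology"
  let ?crossing = "glued_side True \<times> glued_side False \<union> glued_side False \<times> glued_side True"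
  have unsum2: "continuous_map ?Y2 (prod_topology X X) (\<lambda>(p, q). (unsum p, unsum q))"
    using continuous_map_unsum_glued by (simp add: continuous_map_prod_top)
  have "openin ?Y2 {r \<in> topspace ?Y2. u < d (unsum (fst r)) (unsum (snd r))}"
    using lower_semicontinuous_map_compose[OF unsum2 lower_semicontinuous_d]
    unfolding lower_semicontinuous_map_def by (simp add: case_prod_unfold)
  moreover have "openin ?Y2 {r \<in> topspace ?Y2. u < via_A (unsum (fst r)) (unsum (snd r))}"
    using lower_semicontinuous_map_compose[OF unsum2 lower_semicontinuous_via_A]
    unfolding lower_semicontinuous_map_def by (simp add: case_prod_unfold)
  moreover have "openin ?Y2 ?crossing"
    by (simp add: openin_Un openin_prod_Times_iff openin_glued_side)
  moreover have "{r \<in> topspace ?Y2. u < gam (fst r) (snd r)} =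
      {r \<in> topspace ?Y2. u < d (unsum (fst r)) (unsum (snd r))} \<union>
      (?crossing \<inter> {r \<in> topspace ?Y2. u < via_A (unsum (fst r)) (unsum (snd r))})"
  proof (rule set_eqI)
    fix r :: "('a + 'a) \<times> ('a + 'a)"
    show "r \<in> {r \<in> topspace ?Y2. u < gam (fst r) (snd r)} \<longleftrightarrow>
      r \<in> {r \<in> topspace ?Y2. u < d (unsum (fst r)) (unsum (snd r))} \<union>
      (?crossing \<inter> {r \<in> topspace ?Y2. u < via_A (unsum (fst r)) (unsum (snd r))})"
      using less_gammaA_iff[of "fst r" "snd r" u] by (simp add: topspace_glued_topology mem_Times_iff) blast
  qed
  ultimately show "openin ?Y2 {r \<in> topspace ?Y2. u < gam (fst r) (snd r)}"
    by (simp add: openin_Int openin_Un)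
qed

lemma metch_sep_glued: "metch_sep glued_topology gam"
  unfolding metch_sep_def topspace_glued_topology
  using compact_space_glued Hausdorff_space_glued is_metric_on_glued separated_on_glued
    upper_continuous_glued by blast

lemma metch_mor_Inl_glued: "metch_mor X d glued_topology gam Inl"
  unfolding metch_mor_def using continuous_map_Inl_glued by simp

lemma metch_mor_glue_right: "metch_mor X d glued_topology gam glue_right"
proof -
  have "gam (glue_right x) (glue_right y) = d x y" if "x \<in> topspace X" "y \<in> topspace X" for x y
    using that via_A_eq_d by (simp add: glue_right_def via_A_def[symmetric])
  then show ?thesis
    unfolding metch_mor_def using continuous_map_glue_right by simp
qed

lemma gammaA_collapse:
  assumes "p \<in> topspace X <+> topspace X" "q \<in> topspace X <+> topspace X"
  shows "gam (case_sum Inl glue_right p) (case_sum Inl glue_right q) = gam p q"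
proof -
  define c where "c = case_sum Inl glue_right"
  have unsum: "unsum (c s) = unsum s" for s
    by (cases s) (simp_all add: c_def glue_right_def)
  have outside: "unsum s \<notin> A \<Longrightarrow> c s = s" for s
    by (cases s) (simp_all add: c_def glue_right_def)
  have "crossing (c p) (c q) = crossing p q"
    by (cases "unsum p \<in> A"; cases "unsum q \<in> A") (simp_all add: crossing_def unsum outside)
  moreover have "unsum p \<in> topspace X" "unsum q \<in> topspace X"
    using assms by (auto intro: unsum_in_Plus)
  ultimately have "gam (c p) (c q) = gam p q"
    using gammaA_eq_if_crossing[of "c p" "c q"] gammaA_eq_if_crossing[of p q] by (simp add: unsum)
  then show ?thesis
    by (simp add: c_def)
qed

lemma gammaA_le_kernel_metric_pushout:
  assumes pushout: "is_pushout_incl X d A P dP q0 q1"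
    and uv: "u \<in> topspace X <+> topspace X" "v \<in> topspace X <+> topspace X"
  shows "gam u v \<le> kernel_metric dP (case_sum q0 q1) u v"
proof -
  have "\<forall>a\<in>A. Inl a = glue_right a"
    by (simp add: glue_right_def)
  then obtain h where h: "metch_mor P dP glued_topology gam h"
      "\<forall>x\<in>topspace X. h (q0 x) = Inl x \<and> h (q1 x) = glue_right x"
    using pushout metch_sep_glued metch_mor_Inl_glued metch_mor_glue_right
    unfolding is_pushout_incl_def by blast
  have q: "metch_mor X d P dP q0" "metch_mor X d P dP q1"
    using pushout unfolding is_pushout_incl_def by blast+
  have in_P: "case_sum q0 q1 w \<in> topspace P" and h_q: "h (case_sum q0 q1 w) = case_sum Inl glue_right w"
    if "w \<in> topspace X <+> topspace X" for w
    using that q h(2) unfolding metch_mor_def continuous_map_def by auto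
  have "gam u v = gam (h (case_sum q0 q1 u)) (h (case_sum q0 q1 v))"
    using uv by (simp add: h_q gammaA_collapse)
  also have "\<dots> \<le> kernel_metric dP (case_sum q0 q1) u v"
    using h(1) in_P uv unfolding metch_mor_def kernel_metric_def by blast
  finally show ?thesis .
qed

end

theorem lemma5p11:
  fixes X :: "'a topology" and d :: "'a \<Rightarrow> 'a \<Rightarrow> ennreal" and A :: "'a set"
    and P :: "'p topology" and dP :: "'p \<Rightarrow> 'p \<Rightarrow> ennreal" and q0 q1 :: "'a \<Rightarrow> 'p"
  assumes "metch_sep X d"
    and "closedin X A"
    and "is_pushout_incl X d A P dP q0 q1"
  shows "\<forall>u\<in>topspace X <+> topspace X. \<forall>v\<in>topspace X <+> topspace X.
           kernel_metric dP (case_sum q0 q1) u v = gammaA d A u v"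
proof (intro ballI antisym)
  interpret metch_sep_closed_subset X d A
    using assms(1,2) by unfold_locales
  fix u v assume uv: "u \<in> topspace X <+> topspace X" "v \<in> topspace X <+> topspace X"
  have "is_metric_on (topspace P) dP" "metch_mor X d P dP q0" "metch_mor X d P dP q1" "\<forall>a\<in>A. q0 a = q1 a"
    using assms(3) unfolding is_pushout_incl_def metch_sep_def by blast+
  then show "kernel_metric dP (case_sum q0 q1) u v \<le> gammaA d A u v"
    using kernel_metric_le_gammaA A_subset uv by blast
  show "gammaA d A u v \<le> kernel_metric dP (case_sum q0 q1) u v"
    using gammaA_le_kernel_metric_pushout[OF assms(3) uv] .
qed

end
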